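(* Let $K$ be a simplicial complex and let $\overrightarrow{W}$ be a Morse sequence on $K$. Then there exists exactly one reference map for $\overrightarrow{W}$ and exactly one coreference map for $\overrightarrow{W}$.
   Context: A simplicial complex $K$ is a finite collection of non-empty finite sets such that every non-empty subset of a member of $K$ is also in $K$; its members are called simplices (or faces), $\dim\sigma=|\sigma|-1$, $K^{(p)}$ denotes the set of $p$-dimensional simplices, and a facet is a simplex maximal for inclusion. A pair $(\sigma,\tau)$ of simplices of $K$ with $\sigma\subsetneq\tau$ is a free pair for $K$ if $\tau$ is the only simplex of $K$ other than $\sigma$ that contains $\sigma$ (so $\tau$ is a facet and $\dim\tau=\dim\sigma+1$); then $K$ is an elementary expansion of $K\setminus\{\sigma,\tau\}$. If $\nu$ is a facet of $K$, then $K$ is an elementary filling of $K\setminus\{\nu\}$. A Morse sequence on $K$ is a sequence $\overrightarrow{W}=\langle \emptyset=K_0,K_1,\dots,K_k=K\rangle$ of simplicial complexes such that each $K_i$ is an elementary expansion or an elementary filling of $K_{i-1}$. If $K_i=K_{i-1}\cup\{\nu\}$ is a filling, $\nu$ is called critical; if $K_i=K_{i-1}\cup\{\sigma,\tau\}$ is an expansion with $\sigma\subset\tau$, then $(\sigma,\tau)$ is a regular pair, $\sigma$ is lower regular and $\tau$ is upper regular. Let $\widehat{W}$ be the set of critical simplices. Chains mod 2: $K[p]$ is the set of all subsets of $K^{(p)}$, a vector space over $\mathbb{Z}_2$ with symmetric difference as addition, the empty chain written $0$; $\widehat{W}[p]=\{c\in K[p]: c\subseteq \widehat W\}$. For $\sigma\in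 K^{(p)}$, $\partial(\sigma)=\{\tau\in K^{(p-1)}:\tau\subset\sigma\}$ and $\delta(\sigma)=\{\tau\in K^{(p+1)}:\sigma\subset\tau\}$. A frame on $\overrightarrow{W}$ is a map $\Upsilon$ assigning to each $\nu\in K^{(p)}$ an element $\Upsilon(\nu)\in\widehat W[p]$; it is extended linearly to chains by $\Upsilon(c)=\sum_{\nu\in c}\Upsilon(\nu)$ (sum mod 2). A frame $\curlywedge$ is a reference map for $\overrightarrow{W}$ if $\curlywedge(\nu)=\{\nu\}$ for every critical $\nu$ and, for every upper regular $\tau$, $\curlywedge(\tau)=0$ and $\curlywedge(\partial(\tau))=0$. A frame $\curlyvee$ is a coreference map for $\overrightarrow{W}$ if $\curlyvee(\nu)=\{\nu\}$ for every critical $\nu$ and, for every lower regular $\sigma$, $\curlyvee(\sigma)=0$ and $\curlyvee(\delta(\sigma))=0$. *)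

theory Defs
  imports Main
begin

definition simplicial_complex :: "'a set set \<Rightarrow> bool" where
  "simplicial_complex K \<longleftrightarrow> finite K \<and> (\<forall>\<sigma>\<in>K. finite \<sigma> \<and> \<sigma> \<noteq> {}) \<and>
     (\<forall>\<sigma>\<in>K. \<forall>\<tau>. \<tau> \<noteq> {} \<and> \<tau> \<subseteq> \<sigma> \<longrightarrow> \<tau> \<in> K)"

definition dim :: "'a set \<Rightarrow> nat" where "dim \<sigma> = card \<sigma> - 1"

definition psimplices :: "'a set set \<Rightarrow> nat \<Rightarrow> 'a set set" where
  "psimplices K p = {\<sigma>\<in>K. card \<sigma> = p + 1}"

definition free_pair :: "'a set set \<Rightarrow> 'a set \<Rightarrow> 'a set \<Rightarrow> bool" where
  "free_pair K \<sigma> \<tau> \<longleftrightarrow> \<sigma> \<in> K \<and> \<tau> \<in> K \<and> \<sigma> \<subset> \<tau> \<and> (\<forall>\<mu>\<in>K. \<sigma> \<subseteq> \<mu> \<longrightarrow> \<mu> = \<sigma> \<or> \<mu> = \<tau>)"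

definition facet :: "'a set set \<Rightarrow> 'a set \<Rightarrow> bool" where
  "facet K \<nu> \<longleftrightarrow> \<nu> \<in> K \<and> (\<forall>\<mu>\<in>K. \<nu> \<subseteq> \<mu> \<longrightarrow> \<mu> = \<nu>)"

definition expansion_step :: "'a set set \<Rightarrow> 'a set set \<Rightarrow> 'a set \<Rightarrow> 'a set \<Rightarrow> bool" where
  "expansion_step L L' \<sigma> \<tau> \<longleftrightarrow> free_pair L' \<sigma> \<tau> \<and> L = L' - {\<sigma>, \<tau>}"

definition filling_step :: "'a set set \<Rightarrow> 'a set set \<Rightarrow> 'a set \<Rightarrow> bool" where
  "filling_step L L' \<nu> \<longleftrightarrow> facet L' \<nu> \<and> L = L' - {\<nu>}"

definition morse_sequence :: "'a set set \<Rightarrow> 'a set set list \<Rightarrow> bool" where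
  "morse_sequence K W \<longleftrightarrow> W \<noteq> [] \<and> W ! 0 = {} \<and> last W = K \<and>
     (\<forall>i<length W. simplicial_complex (W ! i)) \<and>
     (\<forall>i. 0 < i \<and> i < length W \<longrightarrow>
        (\<exists>\<sigma> \<tau>. expansion_step (W ! (i - 1)) (W ! i) \<sigma> \<tau>) \<or>
        (\<exists>\<nu>. filling_step (W ! (i - 1)) (W ! i) \<nu>))"

definition critical :: "'a set set list \<Rightarrow> 'a set \<Rightarrow> bool" where
  "critical W \<nu> \<longleftrightarrow> (\<exists>i. 0 < i \<and> i < length W \<and> filling_step (W ! (i - 1)) (W ! i) \<nu>)"

definition regular_pair :: "'a set set list \<Rightarrow> 'a set \<Rightarrow> 'a set \<Rightarrow> bool" where
  "regular_pair W \<sigma> \<tau> \<longleftrightarrow> (\<exists>i. 0 < i \<and> i < length W \<and> expansion_step (W ! (i - 1)) (W ! i) \<sigma> \<tau>)"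

definition upper_regular :: "'a set set list \<Rightarrow> 'a set \<Rightarrow> bool" where
  "upper_regular W \<tau> \<longleftrightarrow> (\<exists>\<sigma>. regular_pair W \<sigma> \<tau>)"

definition lower_regular :: "'a set set list \<Rightarrow> 'a set \<Rightarrow> bool" where
  "lower_regular W \<sigma> \<longleftrightarrow> (\<exists>\<tau>. regular_pair W \<sigma> \<tau>)"

definition bd :: "'a set set \<Rightarrow> 'a set \<Rightarrow> 'a set set" where
  "bd K \<sigma> = {\<tau>\<in>K. card \<tau> + 1 = card \<sigma> \<and> \<tau> \<subset> \<sigma>}"

definition cobd :: "'a set set \<Rightarrow> 'a set \<Rightarrow> 'a set set" where
  "cobd K \<sigma> = {\<tau>\<in>K. card \<tau> = card \<sigma> + 1 \<and> \<sigma> \<subset> \<tau>}"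

text \<open>Linear extension of a map to mod-2 chains (finite sets of simplices):
  a simplex occurs in the sum iff it occurs in an odd number of the summands.\<close>
definition chain_ext :: "('a set \<Rightarrow> 'a set set) \<Rightarrow> 'a set set \<Rightarrow> 'a set set" where
  "chain_ext \<Upsilon> c = {\<mu>. odd (card {\<nu>\<in>c. \<mu> \<in> \<Upsilon> \<nu>})}"

text \<open>A frame on W (a Morse sequence on K): each p-simplex of K is sent to a p-chain of
  critical simplices. Frames are maps on K; we normalise them to be empty outside K.\<close>
definition frame :: "'a set set \<Rightarrow> 'a set set list \<Rightarrow> ('a set \<Rightarrow> 'a set set) \<Rightarrow> bool" where
  "frame K W \<Upsilon> \<longleftrightarrow>
     (\<forall>p. \<forall>\<nu>\<in>psimplices K p. \<Upsilon> \<nu> \<subseteq> {\<mu>\<in>psimplices K p. critical W \<mu>}) \<and>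
     (\<forall>\<nu>. \<nu> \<notin> K \<longrightarrow> \<Upsilon> \<nu> = {})"

definition reference_map :: "'a set set \<Rightarrow> 'a set set list \<Rightarrow> ('a set \<Rightarrow> 'a set set) \<Rightarrow> bool" where
  "reference_map K W \<Upsilon> \<longleftrightarrow> frame K W \<Upsilon> \<and>
     (\<forall>\<nu>. critical W \<nu> \<longrightarrow> \<Upsilon> \<nu> = {\<nu>}) \<and>
     (\<forall>\<tau>. upper_regular W \<tau> \<longrightarrow> \<Upsilon> \<tau> = {} \<and> chain_ext \<Upsilon> (bd K \<tau>) = {})"

definition coreference_map :: "'a set set \<Rightarrow> 'a set set list \<Rightarrow> ('a set \<Rightarrow> 'a set set) \<Rightarrow> bool" where
  "coreference_map K W \<Upsilon> \<longleftrightarrow> frame K W \<Upsilon> \<and>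
     (\<forall>\<nu>. critical W \<nu> \<longrightarrow> \<Upsilon> \<nu> = {\<nu>}) \<and>
     (\<forall>\<sigma>. lower_regular W \<sigma> \<longrightarrow> \<Upsilon> \<sigma> = {} \<and> chain_ext \<Upsilon> (cobd K \<sigma>) = {})"

end

theory Submission
  imports Defs
begin

text \<open>
  Both maps are forced step by step along the sequence. A critical \<nu> must go to {\<nu>}; for a
  regular pair (\<sigma>, \<tau>) the simplex \<tau> must go to 0, and then the condition on \<partial>\<tau> says
  that \<sigma> goes to the image of \<partial>\<tau> - {\<sigma>}, whose simplices all appear before \<sigma> and \<tau>.
  Taking these equations as a recursive definition gives existence, and the same recursion
  gives uniqueness. A coreference map is a reference map of the same kind along the reversed
  sequence of complements K - K_i, with coboundaries instead of boundaries and the roles of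
  \<sigma> and \<tau> exchanged, so both statements are instances of one abstract result about
  filtrations built from critical elements and matched pairs.
\<close>

lemma chain_ext_subset_Union: "chain_ext f c \<subseteq> \<Union> (f ` c)"
proof
  fix \<mu> assume "\<mu> \<in> chain_ext f c"
  then have "odd (card {\<nu> \<in> c. \<mu> \<in> f \<nu>})"
    unfolding chain_ext_def by simp
  then have "{\<nu> \<in> c. \<mu> \<in> f \<nu>} \<noteq> {}"
    by (metis card.empty even_zero)
  then show "\<mu> \<in> \<Union> (f ` c)"
    by blast
qed

lemma chain_ext_cong: "(\<And>x. x \<in> c \<Longrightarrow> f x = g x) \<Longrightarrow> chain_ext f c = chain_ext g c"
proof -
  assume "\<And>x. x \<in> c \<Longrightarrow> f x = g x"
  then have "{\<nu> \<in> c. \<mu> \<in> f \<nu>} = {\<nu> \<in> c. \<mu> \<in> g \<nu>}" for \<mu>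
    by auto
  then show ?thesis
    unfolding chain_ext_def by simp
qed

lemma chain_ext_empty_map: "chain_ext (\<lambda>_. {}) c = {}"
  by (simp add: chain_ext_def)

lemma chain_ext_insert:
  assumes "finite c" "x \<notin> c"
  shows "chain_ext f (insert x c) = sym_diff (f x) (chain_ext f c)"
proof -
  have "card {\<nu> \<in> insert x c. \<mu> \<in> f \<nu>} = card {\<nu> \<in> c. \<mu> \<in> f \<nu>} + (if \<mu> \<in> f x then 1 else 0)"
    for \<mu>
  proof (cases "\<mu> \<in> f x")
    case True
    then have "{\<nu> \<in> insert x c. \<mu> \<in> f \<nu>} = insert x {\<nu> \<in> c. \<mu> \<in> f \<nu>}"
      by auto
    then show ?thesis
      using True assms by simp
  next
    case False
    then have "{\<nu> \<in> insert x c. \<mu> \<in> f \<nu>} = {\<nu> \<in> c. \<mu> \<in> f \<nu>}"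
      by auto
    then show ?thesis
      using False by simp
  qed
  then show ?thesis
    unfolding chain_ext_def by auto
qed

lemma chain_ext_eq_empty_iff:
  assumes "finite c" "x \<in> c"
  shows "chain_ext f c = {} \<longleftrightarrow> f x = chain_ext f (c - {x})"
proof -
  have "chain_ext f c = sym_diff (f x) (chain_ext f (c - {x}))"
    using chain_ext_insert[of "c - {x}" x f] assms by (simp add: insert_absorb)
  then show ?thesis
    by blast
qed

text \<open>
  Reference and coreference maps are both instances of \<open>reference_on\<close>: for reference maps
  \<open>matched\<close> is the regular-pair relation (\<sigma>, \<tau>) and \<open>bnd\<close> the boundary; for coreference maps
  \<open>matched\<close> relates \<tau> to \<sigma> for each regular pair (\<sigma>, \<tau>) and \<open>bnd\<close> is the coboundary.
  The set A is the part of the complex built so far.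
\<close>

definition reference_on :: "('a set \<Rightarrow> bool) \<Rightarrow> ('a set \<Rightarrow> 'a set \<Rightarrow> bool) \<Rightarrow> ('a set \<Rightarrow> 'a set set) \<Rightarrow>
    'a set set \<Rightarrow> ('a set \<Rightarrow> 'a set set) \<Rightarrow> bool" where
  "reference_on crit matched bnd A U \<longleftrightarrow>
     (\<forall>x. x \<notin> A \<longrightarrow> U x = {}) \<and>
     (\<forall>x\<in>A. crit x \<longrightarrow> U x = {x}) \<and>
     (\<forall>r z. matched r z \<and> z \<in> A \<longrightarrow> U z = {} \<and> chain_ext U (bnd z) = {})"

definition frame_on ::
    "('a set \<Rightarrow> bool) \<Rightarrow> ('a set \<Rightarrow> nat) \<Rightarrow> 'a set set \<Rightarrow> ('a set \<Rightarrow> 'a set set) \<Rightarrow> bool" where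
  "frame_on crit grade A U \<longleftrightarrow> (\<forall>x\<in>A. U x \<subseteq> {\<mu>\<in>A. crit \<mu> \<and> grade \<mu> = grade x})"

lemma frame_on_insert_critical:
  assumes "frame_on crit grade A U" "crit \<nu>" "\<nu> \<notin> A"
  shows "frame_on crit grade (insert \<nu> A) (U(\<nu> := {\<nu>}))"
  using assms unfolding frame_on_def by auto

lemma frame_on_insert_pair:
  assumes "frame_on crit grade A U" "c \<subseteq> A" "\<And>y. y \<in> c \<Longrightarrow> grade y = grade r"
    and "r \<notin> A" "z \<notin> A"
  shows "frame_on crit grade (insert r (insert z A)) (U(r := chain_ext U c, z := {}))"
proof -
  have "chain_ext U c \<subseteq> {\<mu>\<in>A. crit \<mu> \<and> grade \<mu> = grade r}"
    using chain_ext_subset_Union[of U c] assms(1-3) unfolding frame_on_def by fastforce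
  then show ?thesis
    using assms(1,4,5) unfolding frame_on_def by auto
qed

locale morse_filtration =
  fixes S :: "nat \<Rightarrow> 'a set set" and n :: nat
    and crit :: "'a set \<Rightarrow> bool" and matched :: "'a set \<Rightarrow> 'a set \<Rightarrow> bool"
    and bnd :: "'a set \<Rightarrow> 'a set set"
    and grade :: "'a set \<Rightarrow> nat"
  assumes S_0: "S 0 = {}"
    and S_Suc: "i < n \<Longrightarrow>
      (\<exists>\<nu>. crit \<nu> \<and> \<nu> \<notin> S i \<and> S (Suc i) = insert \<nu> (S i)) \<or>
      (\<exists>r z. matched r z \<and> r \<notin> S i \<and> z \<notin> S i \<and> S (Suc i) = insert r (insert z (S i)) \<and>
         bnd z - {r} \<subseteq> S i)"
    and matched_in_bnd: "matched r z \<Longrightarrow> r \<in> bnd z"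
    and finite_bnd: "matched r z \<Longrightarrow> finite (bnd z)"
    and grade_bnd: "matched r z \<Longrightarrow> y \<in> bnd z \<Longrightarrow> grade y = grade r"
    and crit_not_matched: "crit x \<Longrightarrow> matched r z \<Longrightarrow> x \<noteq> r \<and> x \<noteq> z"
    and matched_snd_not_fst: "matched r z \<Longrightarrow> matched r' z' \<Longrightarrow> z \<noteq> r'"
    and bnd_closed: "matched r z \<Longrightarrow> i \<le> n \<Longrightarrow> z \<in> S i \<Longrightarrow> bnd z \<subseteq> S i"
begin

lemma S_mono: "i \<le> j \<Longrightarrow> j \<le> n \<Longrightarrow> S i \<subseteq> S j"
proof (induction j rule: dec_induct)
  case (step j)
  then show ?case
    using S_Suc[of j] by auto
qed simp

lemma reference_on_insert_critical:
  assumes U: "reference_on crit matched bnd A U" and "crit \<nu>" "\<nu> \<notin> A"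
    and closed: "\<And>r z. matched r z \<Longrightarrow> z \<in> A \<Longrightarrow> bnd z \<subseteq> A"
  shows "reference_on crit matched bnd (insert \<nu> A) (U(\<nu> := {\<nu>}))"
proof -
  have "chain_ext (U(\<nu> := {\<nu>})) (bnd z) = chain_ext U (bnd z)" if "matched r z" "z \<in> A" for r z
    using closed[OF that] \<open>\<nu> \<notin> A\<close> by (intro chain_ext_cong) auto
  then show ?thesis
    using U \<open>\<nu> \<notin> A\<close> unfolding reference_on_def
    by (auto dest: crit_not_matched[OF \<open>crit \<nu>\<close>])
qed

lemma reference_on_insert_pair:
  assumes U: "reference_on crit matched bnd A U" and "matched r z" "r \<notin> A" "z \<notin> A"
    and bnd_z: "bnd z - {r} \<subseteq> A"
    and closed: "\<And>r z. matched r z \<Longrightarrow> z \<in> A \<Longrightarrow> bnd z \<subseteq> A"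
  defines "U' \<equiv> U(r := chain_ext U (bnd z - {r}), z := {})"
  shows "reference_on crit matched bnd (insert r (insert z A)) U'"
proof -
  have "r \<noteq> z"
    using matched_snd_not_fst[OF \<open>matched r z\<close> \<open>matched r z\<close>] by simp
  have U'_A: "U' x = U x" if "x \<in> A" for x
    using that \<open>r \<notin> A\<close> \<open>z \<notin> A\<close> unfolding U'_def by auto
  have "U' r = chain_ext U' (bnd z - {r})"
    using bnd_z U'_A \<open>r \<noteq> z\<close> unfolding U'_def by (auto intro!: chain_ext_cong)
  then have new: "chain_ext U' (bnd z) = {}"
    using chain_ext_eq_empty_iff[OF finite_bnd matched_in_bnd, OF \<open>matched r z\<close> \<open>matched r z\<close>]
    by blast
  have old: "chain_ext U' (bnd z') = chain_ext U (bnd z')" if "matched r' z'" "z' \<in> A" for r' z'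
    using closed[OF that] U'_A by (intro chain_ext_cong) auto
  have "z' \<noteq> r" if "matched r' z'" for r' z'
    using matched_snd_not_fst[OF that \<open>matched r z\<close>] .
  then show ?thesis
    using U new old U'_A unfolding reference_on_def
    by (auto simp: U'_def dest: crit_not_matched[OF _ \<open>matched r z\<close>])
qed

lemma reference_on_exists:
  "i \<le> n \<Longrightarrow> \<exists>U. reference_on crit matched bnd (S i) U \<and> frame_on crit grade (S i) U"
proof (induction i)
  case 0
  have "reference_on crit matched bnd (S 0) (\<lambda>_. {}) \<and> frame_on crit grade (S 0) (\<lambda>_. {})"
    by (simp add: S_0 reference_on_def frame_on_def chain_ext_empty_map)
  then show ?case
    by blast
next
  case (Suc i)
  then obtain U where U: "reference_on crit matched bnd (S i) U" "frame_on crit grade (S i) U"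
    by auto
  have closed: "\<And>r z. matched r z \<Longrightarrow> z \<in> S i \<Longrightarrow> bnd z \<subseteq> S i"
    using bnd_closed Suc.prems by simp
  from Suc.prems have "i < n"
    by simp
  from S_Suc[OF this] show ?case
  proof (elim disjE exE conjE)
    fix \<nu> assume "crit \<nu>" "\<nu> \<notin> S i" and S: "S (Suc i) = insert \<nu> (S i)"
    have "reference_on crit matched bnd (insert \<nu> (S i)) (U(\<nu> := {\<nu>}))"
      using U(1) \<open>crit \<nu>\<close> \<open>\<nu> \<notin> S i\<close> closed by (rule reference_on_insert_critical)
    then show ?thesis
      unfolding S using frame_on_insert_critical[OF U(2) \<open>crit \<nu>\<close> \<open>\<nu> \<notin> S i\<close>] by blast
  next
    fix r z assume rz: "matched r z" "r \<notin> S i" "z \<notin> S i" "bnd z - {r} \<subseteq> S i"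
      and S: "S (Suc i) = insert r (insert z (S i))"
    have "reference_on crit matched bnd (insert r (insert z (S i)))
        (U(r := chain_ext U (bnd z - {r}), z := {}))"
      using U(1) rz closed by (rule reference_on_insert_pair)
    then show ?thesis
      unfolding S using frame_on_insert_pair[OF U(2) rz(4) grade_bnd[OF rz(1)] rz(2,3)] by blast
  qed
qed

lemma reference_on_unique:
  assumes U: "reference_on crit matched bnd (S n) U" and V: "reference_on crit matched bnd (S n) V"
  shows "U = V"
proof -
  have "\<forall>x\<in>S i. U x = V x" if "i \<le> n" for i
    using that
  proof (induction i)
    case (Suc i)
    then have IH: "\<forall>x\<in>S i. U x = V x"
      by simp
    have S_n: "S (Suc i) \<subseteq> S n"
      using S_mono Suc.prems by simp
    from Suc.prems have "i < n"
      by simp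
    from S_Suc[OF this] show ?case
    proof (elim disjE exE conjE)
      fix \<nu> assume "crit \<nu>" "S (Suc i) = insert \<nu> (S i)"
      then show ?thesis
        using IH U V S_n unfolding reference_on_def by auto
    next
      fix r z assume rz: "matched r z" "bnd z - {r} \<subseteq> S i"
        and S: "S (Suc i) = insert r (insert z (S i))"
      have "chain_ext U (bnd z) = {}" "chain_ext V (bnd z) = {}" "U z = {}" "V z = {}"
        using U V rz(1) S S_n unfolding reference_on_def by auto
      moreover have "chain_ext U (bnd z - {r}) = chain_ext V (bnd z - {r})"
        using IH rz(2) by (intro chain_ext_cong) auto
      ultimately have "U r = V r" "U z = V z"
        using chain_ext_eq_empty_iff[OF finite_bnd[OF rz(1)] matched_in_bnd[OF rz(1)]] by auto
      then show ?thesis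
        using IH S by simp
    qed
  qed (simp add: S_0)
  then have "U x = V x" for x
    using U V unfolding reference_on_def by (cases "x \<in> S n") auto
  then show ?thesis
    by blast
qed

theorem ex1_reference_on:
  "\<exists>!U. reference_on crit matched bnd (S n) U \<and> frame_on crit grade (S n) U"
  using reference_on_exists[of n] reference_on_unique by blast

end

lemma simplicial_complex_face:
  "simplicial_complex L \<Longrightarrow> \<sigma> \<in> L \<Longrightarrow> \<tau> \<noteq> {} \<Longrightarrow> \<tau> \<subseteq> \<sigma> \<Longrightarrow> \<tau> \<in> L"
  unfolding simplicial_complex_def by blast

lemma simplicial_complex_simplex: "simplicial_complex K \<Longrightarrow> \<sigma> \<in> K \<Longrightarrow> finite \<sigma> \<and> \<sigma> \<noteq> {}"
  unfolding simplicial_complex_def by blast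

lemma bd_subset_complex:
  assumes "simplicial_complex K" "simplicial_complex L" "\<tau> \<in> L"
  shows "bd K \<tau> \<subseteq> L"
proof
  fix \<mu> assume "\<mu> \<in> bd K \<tau>"
  then have "\<mu> \<in> K" "\<mu> \<subseteq> \<tau>"
    unfolding bd_def by auto
  then show "\<mu> \<in> L"
    using simplicial_complex_face[OF assms(2,3)] simplicial_complex_simplex[OF assms(1)] by blast
qed

lemma cobd_subset_complement:
  assumes "simplicial_complex K" "simplicial_complex L" "\<sigma> \<in> K - L"
  shows "cobd K \<sigma> \<subseteq> K - L"
proof
  fix \<mu> assume "\<mu> \<in> cobd K \<sigma>"
  then have \<mu>: "\<mu> \<in> K" "\<sigma> \<subseteq> \<mu>"
    unfolding cobd_def by auto
  have "\<sigma> \<noteq> {}"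
    using simplicial_complex_simplex[OF assms(1)] assms(3) by blast
  have "\<mu> \<notin> L"
  proof
    assume "\<mu> \<in> L"
    then have "\<sigma> \<in> L"
      using simplicial_complex_face[OF assms(2) _ \<open>\<sigma> \<noteq> {}\<close> \<mu>(2)] by blast
    then show False
      using assms(3) by blast
  qed
  then show "\<mu> \<in> K - L"
    using \<mu>(1) by blast
qed

lemma free_pair_card:
  assumes L: "simplicial_complex L" and free: "free_pair L \<sigma> \<tau>"
  shows "card \<tau> = Suc (card \<sigma>)"
proof -
  obtain x where x: "x \<in> \<tau>" "x \<notin> \<sigma>"
    using free unfolding free_pair_def by blast
  have "finite \<tau>" "\<sigma> \<subset> \<tau>" "\<tau> \<in> L"
    using free L unfolding free_pair_def simplicial_complex_def by auto
  then have "insert x \<sigma> \<in> L"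
    using simplicial_complex_face[OF L, of \<tau> "insert x \<sigma>"] x by blast
  then have "insert x \<sigma> = \<tau>"
    using free x(2) unfolding free_pair_def by blast
  then show ?thesis
    using x(2) \<open>finite \<tau>\<close> by (metis card_insert_disjoint finite_insert)
qed

lemma expansion_stepD:
  assumes "expansion_step L L' \<sigma> \<tau>"
  shows "\<sigma> \<notin> L" "\<tau> \<notin> L" "L' = insert \<sigma> (insert \<tau> L)" "free_pair L' \<sigma> \<tau>"
  using assms unfolding expansion_step_def free_pair_def by auto

lemma filling_stepD:
  assumes "filling_step L L' \<nu>"
  shows "\<nu> \<notin> L" "L' = insert \<nu> L"
  using assms unfolding filling_step_def facet_def by auto

lemma morse_sequence_first: "morse_sequence K W \<Longrightarrow> W ! 0 = {}"
  by (simp add: morse_sequence_def)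

lemma morse_sequence_last: "morse_sequence K W \<Longrightarrow> W ! (length W - 1) = K"
  unfolding morse_sequence_def by (metis last_conv_nth)

lemma morse_sequence_length: "morse_sequence K W \<Longrightarrow> 0 < length W"
  by (simp add: morse_sequence_def)

lemma morse_sequence_complex: "morse_sequence K W \<Longrightarrow> i < length W \<Longrightarrow> simplicial_complex (W ! i)"
  by (simp add: morse_sequence_def)

lemma morse_sequence_simplicial_complex:
  assumes "morse_sequence K W"
  shows "simplicial_complex K"
proof -
  have "length W - 1 < length W"
    using assms unfolding morse_sequence_def by simp
  then show ?thesis
    using morse_sequence_complex[OF assms] morse_sequence_last[OF assms] by metis
qed

lemma morse_sequence_Suc:
  assumes "morse_sequence K W" "Suc i < length W"
  shows "(\<exists>\<sigma> \<tau>. expansion_step (W ! i) (W ! Suc i) \<sigma> \<tau>) \<or> (\<exists>\<nu>. filling_step (W ! i) (W ! Suc i) \<nu>)"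
proof -
  have "(\<exists>\<sigma> \<tau>. expansion_step (W ! (Suc i - 1)) (W ! Suc i) \<sigma> \<tau>) \<or>
      (\<exists>\<nu>. filling_step (W ! (Suc i - 1)) (W ! Suc i) \<nu>)"
    using assms unfolding morse_sequence_def by blast
  then show ?thesis
    by simp
qed

lemma ex_pos_less_conv_Suc: "(\<exists>i. 0 < i \<and> i < n \<and> P (i - 1) i) \<longleftrightarrow> (\<exists>i. Suc i < n \<and> P i (Suc i))"
proof
  assume "\<exists>i. 0 < i \<and> i < n \<and> P (i - 1) i"
  then obtain i where "0 < i" "i < n" "P (i - 1) i"
    by blast
  then show "\<exists>i. Suc i < n \<and> P i (Suc i)"
    by (intro exI[of _ "i - 1"]) simp
qed force

lemma critical_iff: "critical W \<nu> \<longleftrightarrow> (\<exists>i. Suc i < length W \<and> filling_step (W ! i) (W ! Suc i) \<nu>)"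
  unfolding critical_def
  using ex_pos_less_conv_Suc[where P = "\<lambda>j i. filling_step (W ! j) (W ! i) \<nu>"] by simp

lemma regular_pair_iff:
  "regular_pair W \<sigma> \<tau> \<longleftrightarrow> (\<exists>i. Suc i < length W \<and> expansion_step (W ! i) (W ! Suc i) \<sigma> \<tau>)"
  unfolding regular_pair_def
  using ex_pos_less_conv_Suc[where P = "\<lambda>j i. expansion_step (W ! j) (W ! i) \<sigma> \<tau>"] by simp

lemma morse_sequence_mono:
  assumes "morse_sequence K W" "i \<le> j" "j < length W"
  shows "W ! i \<subseteq> W ! j"
  using assms(2,3)
proof (induction j rule: dec_induct)
  case (step j)
  from morse_sequence_Suc[OF assms(1) \<open>Suc j < length W\<close>]
  have "W ! j \<subseteq> W ! Suc j"
    by (elim disjE exE) (auto dest: expansion_stepD(3) filling_stepD(2))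
  then show ?case
    using step by simp
qed simp

lemma morse_sequence_subset: "morse_sequence K W \<Longrightarrow> i < length W \<Longrightarrow> W ! i \<subseteq> K"
  using morse_sequence_mono[of K W i "length W - 1"] morse_sequence_last[of K W] by simp

lemma morse_sequence_added_once:
  assumes "morse_sequence K W" "Suc i < length W" "Suc j < length W"
    and "x \<in> W ! Suc i - W ! i" "x \<in> W ! Suc j - W ! j"
  shows "i = j"
proof (rule ccontr)
  assume "i \<noteq> j"
  then consider "Suc i \<le> j" | "Suc j \<le> i"
    by linarith
  then show False
  proof cases
    case 1
    then show False
      using morse_sequence_mono[OF assms(1) 1] assms(3,4,5) by auto
  next
    case 2
    then show False
      using morse_sequence_mono[OF assms(1) 2] assms(2,4,5) by auto
  qed
qed

lemma critical_not_regular: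
  assumes "morse_sequence K W" "critical W \<nu>" "regular_pair W \<sigma> \<tau>"
  shows "\<nu> \<noteq> \<sigma> \<and> \<nu> \<noteq> \<tau>"
proof (rule ccontr)
  assume same: "\<not> (\<nu> \<noteq> \<sigma> \<and> \<nu> \<noteq> \<tau>)"
  obtain i where i: "Suc i < length W" "filling_step (W ! i) (W ! Suc i) \<nu>"
    using assms(2) unfolding critical_iff by blast
  obtain j where j: "Suc j < length W" "expansion_step (W ! j) (W ! Suc j) \<sigma> \<tau>"
    using assms(3) unfolding regular_pair_iff by blast
  note fill = filling_stepD[OF i(2)] and exp = expansion_stepD[OF j(2)]
  have "\<nu> \<in> W ! Suc i - W ! i" "\<nu> \<in> W ! Suc j - W ! j"
    using fill exp same by auto
  then have "i = j"
    using morse_sequence_added_once[OF assms(1) i(1) j(1)] by blast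
  then have "\<sigma> = \<nu>" "\<tau> = \<nu>"
    using fill exp by auto
  then show False
    using exp unfolding free_pair_def by blast
qed

lemma regular_pair_upper_not_lower:
  assumes "morse_sequence K W" "regular_pair W \<sigma> \<tau>" "regular_pair W \<tau> \<rho>"
  shows False
proof -
  obtain i where i: "Suc i < length W" "expansion_step (W ! i) (W ! Suc i) \<sigma> \<tau>"
    using assms(2) unfolding regular_pair_iff by blast
  obtain j where j: "Suc j < length W" "expansion_step (W ! j) (W ! Suc j) \<tau> \<rho>"
    using assms(3) unfolding regular_pair_iff by blast
  note exp_i = expansion_stepD[OF i(2)] and exp_j = expansion_stepD[OF j(2)]
  have "\<sigma> \<subset> \<tau>" "\<tau> \<subset> \<rho>"
    using exp_i exp_j unfolding free_pair_def by blast+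
  have "\<tau> \<in> W ! Suc i - W ! i" "\<tau> \<in> W ! Suc j - W ! j"
    using exp_i exp_j by auto
  then have "i = j"
    using morse_sequence_added_once[OF assms(1) i(1) j(1)] by blast
  then have "\<sigma> = \<rho>"
    using exp_i exp_j \<open>\<sigma> \<subset> \<tau>\<close> by auto
  then show False
    using \<open>\<sigma> \<subset> \<tau>\<close> \<open>\<tau> \<subset> \<rho>\<close> by blast
qed

lemma critical_in:
  assumes "morse_sequence K W" "critical W \<nu>"
  shows "\<nu> \<in> K"
proof -
  obtain i where i: "Suc i < length W" "filling_step (W ! i) (W ! Suc i) \<nu>"
    using assms(2) unfolding critical_iff by blast
  then show ?thesis
    using morse_sequence_subset[OF assms(1) i(1)] filling_stepD(2)[OF i(2)] by blast
qed

lemma regular_pair_in: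
  assumes "morse_sequence K W" "regular_pair W \<sigma> \<tau>"
  shows "\<sigma> \<in> K \<and> \<tau> \<in> K"
proof -
  obtain i where i: "Suc i < length W" "expansion_step (W ! i) (W ! Suc i) \<sigma> \<tau>"
    using assms(2) unfolding regular_pair_iff by blast
  then show ?thesis
    using morse_sequence_subset[OF assms(1) i(1)] expansion_stepD(3)[OF i(2)] by blast
qed

lemma regular_pair_psubset_card:
  assumes "morse_sequence K W" "regular_pair W \<sigma> \<tau>"
  shows "\<sigma> \<subset> \<tau> \<and> card \<tau> = Suc (card \<sigma>)"
proof -
  obtain i where i: "Suc i < length W" "expansion_step (W ! i) (W ! Suc i) \<sigma> \<tau>"
    using assms(2) unfolding regular_pair_iff by blast
  have "free_pair (W ! Suc i) \<sigma> \<tau>"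
    using expansion_stepD(4)[OF i(2)] .
  then show ?thesis
    using free_pair_card[OF morse_sequence_complex[OF assms(1) i(1)]] unfolding free_pair_def by blast
qed

lemma morse_sequence_Suc_elementary:
  assumes ms: "morse_sequence K W" and i: "Suc i < length W"
  shows "(\<exists>\<nu>. critical W \<nu> \<and> \<nu> \<notin> W ! i \<and> W ! Suc i = insert \<nu> (W ! i)) \<or>
    (\<exists>\<sigma> \<tau>. regular_pair W \<sigma> \<tau> \<and> \<sigma> \<notin> W ! i \<and> \<tau> \<notin> W ! i \<and>
       W ! Suc i = insert \<sigma> (insert \<tau> (W ! i)) \<and> bd K \<tau> - {\<sigma>} \<subseteq> W ! i)"
  using morse_sequence_Suc[OF ms i]
proof (elim disjE exE)
  fix \<sigma> \<tau> assume step: "expansion_step (W ! i) (W ! Suc i) \<sigma> \<tau>"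
  note new = expansion_stepD[OF step]
  have "bd K \<tau> \<subseteq> W ! Suc i"
    using bd_subset_complex[OF morse_sequence_simplicial_complex[OF ms] morse_sequence_complex[OF ms i]]
      new(3) by blast
  moreover have "\<tau> \<notin> bd K \<tau>"
    unfolding bd_def by blast
  ultimately have "bd K \<tau> - {\<sigma>} \<subseteq> W ! i"
    using new(3) by blast
  moreover have "regular_pair W \<sigma> \<tau>"
    unfolding regular_pair_iff using i step by blast
  ultimately show ?thesis
    using new(1-3) by blast
next
  fix \<nu> assume step: "filling_step (W ! i) (W ! Suc i) \<nu>"
  then have "critical W \<nu>"
    unfolding critical_iff using i by blast
  then show ?thesis
    using filling_stepD[OF step] by blast
qed

lemma morse_sequence_complement_elementary:
  assumes ms: "morse_sequence K W" and i: "Suc i < length W"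
  shows "(\<exists>\<nu>. critical W \<nu> \<and> \<nu> \<notin> K - W ! Suc i \<and> K - W ! i = insert \<nu> (K - W ! Suc i)) \<or>
    (\<exists>\<tau> \<sigma>. regular_pair W \<sigma> \<tau> \<and> \<tau> \<notin> K - W ! Suc i \<and> \<sigma> \<notin> K - W ! Suc i \<and>
       K - W ! i = insert \<tau> (insert \<sigma> (K - W ! Suc i)) \<and> cobd K \<sigma> - {\<tau>} \<subseteq> K - W ! Suc i)"
  using morse_sequence_Suc[OF ms i]
proof (elim disjE exE)
  have W_K: "W ! Suc i \<subseteq> K"
    using morse_sequence_subset[OF ms i] .
  fix \<sigma> \<tau> assume step: "expansion_step (W ! i) (W ! Suc i) \<sigma> \<tau>"
  note new = expansion_stepD[OF step]
  have "cobd K \<sigma> - {\<tau>} \<subseteq> K - W ! Suc i"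
    using new(4) unfolding free_pair_def cobd_def by blast
  moreover have "K - W ! i = insert \<tau> (insert \<sigma> (K - W ! Suc i))"
    using new(1,2) W_K unfolding new(3) by auto
  moreover have "regular_pair W \<sigma> \<tau>"
    unfolding regular_pair_iff using i step by blast
  moreover have "\<sigma> \<notin> K - W ! Suc i" "\<tau> \<notin> K - W ! Suc i"
    unfolding new(3) by simp_all
  ultimately show ?thesis
    by blast
next
  have W_K: "W ! Suc i \<subseteq> K"
    using morse_sequence_subset[OF ms i] .
  fix \<nu> assume step: "filling_step (W ! i) (W ! Suc i) \<nu>"
  then have "critical W \<nu>"
    unfolding critical_iff using i by blast
  moreover have "K - W ! i = insert \<nu> (K - W ! Suc i)"
    using filling_stepD(1)[OF step] W_K unfolding filling_stepD(2)[OF step] by auto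
  moreover have "\<nu> \<notin> K - W ! Suc i"
    unfolding filling_stepD(2)[OF step] by simp
  ultimately show ?thesis
    by blast
qed

lemma morse_filtration_reference:
  assumes ms: "morse_sequence K W"
  shows "morse_filtration ((!) W) (length W - 1) (critical W) (regular_pair W) (bd K) card"
proof
  have K: "simplicial_complex K"
    using ms by (rule morse_sequence_simplicial_complex)
  show "W ! 0 = {}"
    using ms by (rule morse_sequence_first)
  show "finite (bd K z)" for z
    using K unfolding simplicial_complex_def bd_def by simp
  show "r \<in> bd K z" "y \<in> bd K z \<Longrightarrow> card y = card r" if "regular_pair W r z" for r z y
    using regular_pair_psubset_card[OF ms that] regular_pair_in[OF ms that] unfolding bd_def by auto
  show "critical W x \<Longrightarrow> regular_pair W r z \<Longrightarrow> x \<noteq> r \<and> x \<noteq> z" for x r z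
    using ms by (rule critical_not_regular)
  show "z \<noteq> r'" if "regular_pair W r z" "regular_pair W r' z'" for r z r' z'
    using regular_pair_upper_not_lower[OF ms that(1)] that(2) by blast
  show "bd K z \<subseteq> W ! i" if "i \<le> length W - 1" "z \<in> W ! i" for z i
  proof -
    have "i < length W"
      using that(1) morse_sequence_length[OF ms] by linarith
    then show ?thesis
      using bd_subset_complex[OF K morse_sequence_complex[OF ms] that(2)] by blast
  qed
  show "(\<exists>\<nu>. critical W \<nu> \<and> \<nu> \<notin> W ! i \<and> W ! Suc i = insert \<nu> (W ! i)) \<or>
    (\<exists>r z. regular_pair W r z \<and> r \<notin> W ! i \<and> z \<notin> W ! i \<and>
       W ! Suc i = insert r (insert z (W ! i)) \<and> bd K z - {r} \<subseteq> W ! i)"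
    if "i < length W - 1" for i
    using morse_sequence_Suc_elementary[OF ms] that by simp
qed

lemma morse_filtration_coreference:
  assumes ms: "morse_sequence K W"
  shows "morse_filtration (\<lambda>j. K - W ! (length W - 1 - j)) (length W - 1)
    (critical W) (\<lambda>r z. regular_pair W z r) (cobd K) card"
proof
  have K: "simplicial_complex K"
    using ms by (rule morse_sequence_simplicial_complex)
  show "K - W ! (length W - 1 - 0) = {}"
    using morse_sequence_last[OF ms] by simp
  show "finite (cobd K z)" for z
    using K unfolding simplicial_complex_def cobd_def by simp
  show "r \<in> cobd K z" "y \<in> cobd K z \<Longrightarrow> card y = card r" if "regular_pair W z r" for r z y
    using regular_pair_psubset_card[OF ms that] regular_pair_in[OF ms that] unfolding cobd_def by auto
  show "x \<noteq> r \<and> x \<noteq> z" if "critical W x" "regular_pair W z r" for x r z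
    using critical_not_regular[OF ms that] by blast
  show "z \<noteq> r'" if "regular_pair W z r" "regular_pair W z' r'" for r z r' z'
    using regular_pair_upper_not_lower[OF ms that(2)] that(1) by blast
  show "cobd K z \<subseteq> K - W ! (length W - 1 - j)" if "z \<in> K - W ! (length W - 1 - j)" for z j
  proof -
    have "length W - 1 - j < length W"
      using morse_sequence_length[OF ms] by linarith
    then show ?thesis
      using cobd_subset_complement[OF K morse_sequence_complex[OF ms] that] by blast
  qed
  fix j assume "j < length W - 1"
  then have i: "Suc (length W - 1 - Suc j) < length W"
    and idx: "length W - 1 - j = Suc (length W - 1 - Suc j)"
    by auto
  show "(\<exists>\<nu>. critical W \<nu> \<and> \<nu> \<notin> K - W ! (length W - 1 - j) \<and>
       K - W ! (length W - 1 - Suc j) = insert \<nu> (K - W ! (length W - 1 - j))) \<or>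
    (\<exists>r z. regular_pair W z r \<and> r \<notin> K - W ! (length W - 1 - j) \<and> z \<notin> K - W ! (length W - 1 - j) \<and>
       K - W ! (length W - 1 - Suc j) = insert r (insert z (K - W ! (length W - 1 - j))) \<and>
       cobd K z - {r} \<subseteq> K - W ! (length W - 1 - j))"
    unfolding idx by (rule morse_sequence_complement_elementary[OF ms i])
qed

lemma frame_iff_frame_on:
  assumes "simplicial_complex K"
  shows "frame K W U \<longleftrightarrow> (\<forall>x. x \<notin> K \<longrightarrow> U x = {}) \<and> frame_on (critical W) card K U"
proof -
  have graded_iff: "(\<forall>p. \<forall>\<nu>\<in>psimplices K p. U \<nu> \<subseteq> {\<mu>\<in>psimplices K p. critical W \<mu>}) \<longleftrightarrow>
      frame_on (critical W) card K U"
  proof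
    assume graded: "\<forall>p. \<forall>\<nu>\<in>psimplices K p. U \<nu> \<subseteq> {\<mu>\<in>psimplices K p. critical W \<mu>}"
    show "frame_on (critical W) card K U"
      unfolding frame_on_def
    proof
      fix x assume "x \<in> K"
      then obtain p where p: "card x = p + 1"
        using simplicial_complex_simplex[OF assms] by (metis Suc_eq_plus1 card_gt_0_iff gr0_conv_Suc)
      then have "U x \<subseteq> {\<mu>\<in>psimplices K p. critical W \<mu>}"
        using graded \<open>x \<in> K\<close> unfolding psimplices_def by blast
      then show "U x \<subseteq> {\<mu>\<in>K. critical W \<mu> \<and> card \<mu> = card x}"
        using p unfolding psimplices_def by auto
    qed
  next
    assume graded: "frame_on (critical W) card K U"
    show "\<forall>p. \<forall>\<nu>\<in>psimplices K p. U \<nu> \<subseteq> {\<mu>\<in>psimplices K p. critical W \<mu>}"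
    proof (intro allI ballI)
      fix p \<nu> assume "\<nu> \<in> psimplices K p"
      then have "\<nu> \<in> K" "card \<nu> = p + 1"
        unfolding psimplices_def by auto
      moreover have "U \<nu> \<subseteq> {\<mu>\<in>K. critical W \<mu> \<and> card \<mu> = card \<nu>}"
        using graded \<open>\<nu> \<in> K\<close> unfolding frame_on_def by blast
      ultimately show "U \<nu> \<subseteq> {\<mu>\<in>psimplices K p. critical W \<mu>}"
        unfolding psimplices_def by auto
    qed
  qed
  show ?thesis
    unfolding frame_def graded_iff by (rule conj_commute)
qed

lemma reference_map_iff:
  assumes "morse_sequence K W"
  shows "reference_map K W U \<longleftrightarrow>
    reference_on (critical W) (regular_pair W) (bd K) K U \<and> frame_on (critical W) card K U"
proof -
  have "(\<forall>\<nu>. critical W \<nu> \<longrightarrow> U \<nu> = {\<nu>}) \<longleftrightarrow> (\<forall>x\<in>K. critical W x \<longrightarrow> U x = {x})"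
    using critical_in[OF assms] by blast
  moreover have "(\<forall>\<tau>. upper_regular W \<tau> \<longrightarrow> U \<tau> = {} \<and> chain_ext U (bd K \<tau>) = {}) \<longleftrightarrow>
      (\<forall>r z. regular_pair W r z \<and> z \<in> K \<longrightarrow> U z = {} \<and> chain_ext U (bd K z) = {})"
    using regular_pair_in[OF assms] unfolding upper_regular_def by blast
  ultimately show ?thesis
    unfolding reference_map_def reference_on_def
      frame_iff_frame_on[OF morse_sequence_simplicial_complex[OF assms]]
    by argo
qed

lemma coreference_map_iff:
  assumes "morse_sequence K W"
  shows "coreference_map K W U \<longleftrightarrow>
    reference_on (critical W) (\<lambda>r z. regular_pair W z r) (cobd K) K U \<and> frame_on (critical W) card K U"
proof -
  have "(\<forall>\<nu>. critical W \<nu> \<longrightarrow> U \<nu> = {\<nu>}) \<longleftrightarrow> (\<forall>x\<in>K. critical W x \<longrightarrow> U x = {x})"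
    using critical_in[OF assms] by blast
  moreover have "(\<forall>\<sigma>. lower_regular W \<sigma> \<longrightarrow> U \<sigma> = {} \<and> chain_ext U (cobd K \<sigma>) = {}) \<longleftrightarrow>
      (\<forall>r z. regular_pair W z r \<and> z \<in> K \<longrightarrow> U z = {} \<and> chain_ext U (cobd K z) = {})"
    using regular_pair_in[OF assms] unfolding lower_regular_def by blast
  ultimately show ?thesis
    unfolding coreference_map_def reference_on_def
      frame_iff_frame_on[OF morse_sequence_simplicial_complex[OF assms]]
    by argo
qed

theorem theorem1:
  fixes K :: "'a set set" and W :: "'a set set list"
  assumes "simplicial_complex K" and "morse_sequence K W"
  shows "(\<exists>!\<Upsilon>. reference_map K W \<Upsilon>) \<and> (\<exists>!\<Upsilon>. coreference_map K W \<Upsilon>)"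
proof
  interpret reference: morse_filtration "(!) W" "length W - 1" "critical W" "regular_pair W" "bd K" card
    using assms(2) by (rule morse_filtration_reference)
  show "\<exists>!\<Upsilon>. reference_map K W \<Upsilon>"
    using reference.ex1_reference_on
    unfolding reference_map_iff[OF assms(2)] morse_sequence_last[OF assms(2)] .
next
  interpret coreference: morse_filtration "\<lambda>j. K - W ! (length W - 1 - j)" "length W - 1"
      "critical W" "\<lambda>r z. regular_pair W z r" "cobd K" card
    using assms(2) by (rule morse_filtration_coreference)
  show "\<exists>!\<Upsilon>. coreference_map K W \<Upsilon>"
    using coreference.ex1_reference_on
    by (simp add: coreference_map_iff[OF assms(2)] morse_sequence_first[OF assms(2)])
qed

end
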